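(* Let $\beta,\beta'$ be pseudo-Anosov 3-braids and suppose that for some $l,m\ge1$ the triple-weight train tracks $\mathcal T_l$ (for $\beta$) and $\mathcal T'_m$ (for $\beta'$) have the same 4-ratio. Then for all $t\ge1$, $\mathcal T_{l+t}$ and $\mathcal T'_{m+t}$ have the same 4-ratio, and their 4-tuples have the same type (both Type 1 or both Type 2).
   Context: Identify $B_3$ with the mapping class group of the 3-punctured disk $D_3$. A measured train track on $D_3$ is a smooth graph with trivalent switches where the three edges are tangent, each edge having a positive weight, satisfying at each switch: weight on one side = sum of the two weights on the other side; weights up to scaling. Maximal splitting $\tau\rightharpoonup\tau'$ splits simultaneously along all edges of largest weight (an edge of weight $a+b=c+d$ with neighbouring weights $a,b$ at one end and $c,d$ at the other is replaced by an edge of weight $|c-a|$). The paper fixes measured train tracks $\mathrm M(a,b),\mathrm W(a,b)$ ($a,b>0$) on $D_3$ with six edges and four switches ($\mathrm W(a,b)$ the $180^\circ$ rotation of $\mathrm M(a,b)$). For a pseudo-Anosov 3-braid $\beta$ there is a unique irrational $\alpha\in(0,1)$ (the MP-ratio) such that exactly one of $\mathrm M(1,\alpha),\mathrm M(\alpha,1),\mathrm W(\alpha,1),\mathrm W(1,\alpha)$ is invariant under $\beta$; call it $\tau_0$, let $n=\lfloor1/\alpha\rfloor$ and $\tau_0\rightharpoonup\tau_1\rightharpoonup\cdots$ the maximal splitting sequence. From $\tau_{n+4}$ on all train tracks have exactly three distinct edge weights; set $\mathcal T_k:=\tau_{n+3+k}$ ($k\ge1$). Writing the smallest weight of $\mathcal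 T_k$ as $\tfrac12(x_k+y_k\alpha)$ and the second smallest as $\tfrac12(z_k+w_k\alpha)$ with $x_k,y_k,z_k,w_k\in\mathbb Z$, $(x_k,y_k;z_k,w_k)$ is the 4-tuple and $\frac{x_k+y_k\alpha}{z_k+w_k\alpha}$ the 4-ratio of $\mathcal T_k$. Put $(x_0,y_0;z_0,w_0)=(1,-n;0,1)$. For each $k\ge0$ the 4-tuple of $\mathcal T_{k+1}$ equals either $(z_k-x_k,w_k-y_k;x_k,y_k)$, in which case it is said to be of Type 1, or $(x_k,y_k;z_k-x_k,w_k-y_k)$, in which case it is of Type 2. The same data for $\beta'$ are primed. *)

theory Defs
  imports Complex_Main
begin

text \<open>Abstract rendering of the 4-tuple data attached to the maximal splitting
sequence of a pseudo-Anosov 3-braid.  A 4-tuple (x, y, z, w) of integers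
encodes the smallest weight (x + y*alpha)/2 and the second smallest weight
(z + w*alpha)/2 of a triple-weight train track.  The sequence q is indexed so
that q k is the 4-tuple of T_k for k >= 1 and q 0 = (1, -n; 0, 1) with
n = floor (1/alpha).\<close>

type_synonym four_tuple = "int \<times> int \<times> int \<times> int"

definition tw_weight :: "real \<Rightarrow> int \<Rightarrow> int \<Rightarrow> real" where
  "tw_weight \<alpha> a b = (real_of_int a + real_of_int b * \<alpha>) / 2"

definition smallest_weight :: "real \<Rightarrow> four_tuple \<Rightarrow> real" where
  "smallest_weight \<alpha> t = (case t of (x, y, z, w) \<Rightarrow> tw_weight \<alpha> x y)"

definition second_weight :: "real \<Rightarrow> four_tuple \<Rightarrow> real" where
  "second_weight \<alpha> t = (case t of (x, y, z, w) \<Rightarrow> tw_weight \<alpha> z w)"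

definition four_ratio :: "real \<Rightarrow> four_tuple \<Rightarrow> real" where
  "four_ratio \<alpha> t = (case t of (x, y, z, w) \<Rightarrow>
     (real_of_int x + real_of_int y * \<alpha>) / (real_of_int z + real_of_int w * \<alpha>))"

definition type1 :: "(nat \<Rightarrow> four_tuple) \<Rightarrow> nat \<Rightarrow> bool" where
  "type1 q k = (case q k of (x, y, z, w) \<Rightarrow> q (Suc k) = (z - x, w - y, x, y))"

definition type2 :: "(nat \<Rightarrow> four_tuple) \<Rightarrow> nat \<Rightarrow> bool" where
  "type2 q k = (case q k of (x, y, z, w) \<Rightarrow> q (Suc k) = (x, y, z - x, w - y))"

text \<open>The facts recorded in the paper's setting about the 4-tuple sequence of a
pseudo-Anosov 3-braid with MP-ratio alpha.\<close>
definition MP_tuple_seq :: "real \<Rightarrow> (nat \<Rightarrow> four_tuple) \<Rightarrow> bool" where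
  "MP_tuple_seq \<alpha> q \<longleftrightarrow>
     0 < \<alpha> \<and> \<alpha> < 1 \<and> \<alpha> \<notin> \<rat> \<and>
     q 0 = (1, - \<lfloor>1 / \<alpha>\<rfloor>, 0, 1) \<and>
     (\<forall>k. type1 q k \<or> type2 q k) \<and>
     (\<forall>k\<ge>1. 0 < smallest_weight \<alpha> (q k) \<and> smallest_weight \<alpha> (q k) < second_weight \<alpha> (q k))"

end

theory Submission
  imports Defs
begin

text \<open>The 4-ratio of a triple-weight train track is the quotient \<open>r = a/b\<close> of its smallest
weight \<open>a\<close> by its second smallest weight \<open>b\<close>.  A Type 1 step replaces \<open>(a, b)\<close> by
\<open>(b - a, a)\<close>; as the new track again satisfies \<open>0 < b - a < a\<close>, this forces \<open>r > 1/2\<close>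
and gives the ratio \<open>1/r - 1\<close>.  A Type 2 step replaces \<open>(a, b)\<close> by \<open>(a, b - a)\<close>, which
forces \<open>r < 1/2\<close> and gives \<open>r/(1 - r)\<close>.  So the current 4-ratio determines both the type
of the next step and the next 4-ratio, and the theorem follows by induction on \<open>t\<close>.\<close>

definition next_four_ratio :: "real \<Rightarrow> real" where
  "next_four_ratio r = (if 1/2 < r then 1/r - 1 else r / (1 - r))"

lemma four_ratio_eq_weights:
  "four_ratio \<alpha> t = smallest_weight \<alpha> t / second_weight \<alpha> t"
  by (cases t)
    (simp add: four_ratio_def smallest_weight_def second_weight_def tw_weight_def divide_simps;
     simp add: algebra_simps)

lemma tw_weight_diff:
  "tw_weight \<alpha> (a - c) (b - d) = tw_weight \<alpha> a b - tw_weight \<alpha> c d"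
  by (simp add: tw_weight_def diff_divide_distrib algebra_simps)

lemma type1_weights:
  assumes "type1 q k"
  shows "smallest_weight \<alpha> (q (Suc k)) = second_weight \<alpha> (q k) - smallest_weight \<alpha> (q k)"
    and "second_weight \<alpha> (q (Suc k)) = smallest_weight \<alpha> (q k)"
proof -
  obtain x y z w where "q k = (x, y, z, w)" by (cases "q k")
  moreover from this assms have "q (Suc k) = (z - x, w - y, x, y)" by (simp add: type1_def)
  ultimately show "smallest_weight \<alpha> (q (Suc k)) = second_weight \<alpha> (q k) - smallest_weight \<alpha> (q k)"
    and "second_weight \<alpha> (q (Suc k)) = smallest_weight \<alpha> (q k)"
    by (simp_all add: smallest_weight_def second_weight_def tw_weight_diff)
qed

lemma type2_weights:
  assumes "type2 q k"
  shows "smallest_weight \<alpha> (q (Suc k)) = smallest_weight \<alpha> (q k)"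
    and "second_weight \<alpha> (q (Suc k)) = second_weight \<alpha> (q k) - smallest_weight \<alpha> (q k)"
proof -
  obtain x y z w where "q k = (x, y, z, w)" by (cases "q k")
  moreover from this assms have "q (Suc k) = (x, y, z - x, w - y)" by (simp add: type2_def)
  ultimately show "smallest_weight \<alpha> (q (Suc k)) = smallest_weight \<alpha> (q k)"
    and "second_weight \<alpha> (q (Suc k)) = second_weight \<alpha> (q k) - smallest_weight \<alpha> (q k)"
    by (simp_all add: smallest_weight_def second_weight_def tw_weight_diff)
qed

lemma MP_tuple_seq_type:
  "MP_tuple_seq \<alpha> q \<Longrightarrow> type1 q k \<or> type2 q k"
  by (simp add: MP_tuple_seq_def)

lemma MP_tuple_seq_weights:
  "MP_tuple_seq \<alpha> q \<Longrightarrow> 1 \<le> k \<Longrightarrow>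
    0 < smallest_weight \<alpha> (q k) \<and> smallest_weight \<alpha> (q k) < second_weight \<alpha> (q k)"
  by (simp add: MP_tuple_seq_def)

lemma MP_tuple_seq_type1_step:
  assumes "MP_tuple_seq \<alpha> q" "1 \<le> k" "type1 q k"
  shows "1/2 < four_ratio \<alpha> (q k)"
    and "four_ratio \<alpha> (q (Suc k)) = 1 / four_ratio \<alpha> (q k) - 1"
proof -
  let ?a = "smallest_weight \<alpha> (q k)" and ?b = "second_weight \<alpha> (q k)"
  have "0 < ?a" "?a < ?b"
    using MP_tuple_seq_weights[OF assms(1,2)] by auto
  moreover have "0 < ?b - ?a" "?b - ?a < ?a"
    using MP_tuple_seq_weights[OF assms(1), of "Suc k"] type1_weights[OF assms(3)] by auto
  ultimately show "1/2 < four_ratio \<alpha> (q k)"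
    and "four_ratio \<alpha> (q (Suc k)) = 1 / four_ratio \<alpha> (q k) - 1"
    using type1_weights[OF assms(3)] by (auto simp: four_ratio_eq_weights field_simps)
qed

lemma MP_tuple_seq_type2_step:
  assumes "MP_tuple_seq \<alpha> q" "1 \<le> k" "type2 q k"
  shows "four_ratio \<alpha> (q k) < 1/2"
    and "four_ratio \<alpha> (q (Suc k)) = four_ratio \<alpha> (q k) / (1 - four_ratio \<alpha> (q k))"
proof -
  let ?a = "smallest_weight \<alpha> (q k)" and ?b = "second_weight \<alpha> (q k)"
  have "0 < ?a" "?a < ?b"
    using MP_tuple_seq_weights[OF assms(1,2)] by auto
  moreover have "?a < ?b - ?a"
    using MP_tuple_seq_weights[OF assms(1), of "Suc k"] type2_weights[OF assms(3)] by auto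
  ultimately show "four_ratio \<alpha> (q k) < 1/2"
    and "four_ratio \<alpha> (q (Suc k)) = four_ratio \<alpha> (q k) / (1 - four_ratio \<alpha> (q k))"
    using type2_weights[OF assms(3)] by (auto simp: four_ratio_eq_weights field_simps)
qed

lemma MP_tuple_seq_type1_iff:
  assumes "MP_tuple_seq \<alpha> q" "1 \<le> k"
  shows "type1 q k \<longleftrightarrow> 1/2 < four_ratio \<alpha> (q k)"
  using MP_tuple_seq_type[OF assms(1), of k] MP_tuple_seq_type1_step[OF assms]
    MP_tuple_seq_type2_step[OF assms] by fastforce

lemma MP_tuple_seq_type2_iff:
  assumes "MP_tuple_seq \<alpha> q" "1 \<le> k"
  shows "type2 q k \<longleftrightarrow> four_ratio \<alpha> (q k) < 1/2"
  using MP_tuple_seq_type[OF assms(1), of k] MP_tuple_seq_type1_step[OF assms]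
    MP_tuple_seq_type2_step[OF assms] by fastforce

lemma MP_tuple_seq_four_ratio_Suc:
  assumes "MP_tuple_seq \<alpha> q" "1 \<le> k"
  shows "four_ratio \<alpha> (q (Suc k)) = next_four_ratio (four_ratio \<alpha> (q k))"
  using MP_tuple_seq_type[OF assms(1), of k] MP_tuple_seq_type1_step[OF assms]
    MP_tuple_seq_type2_step[OF assms] by (auto simp: next_four_ratio_def)

theorem lemma7p3:
  fixes \<alpha> \<alpha>' :: real and q q' :: "nat \<Rightarrow> four_tuple" and l m :: nat
  assumes "MP_tuple_seq \<alpha> q" and "MP_tuple_seq \<alpha>' q'"
    and "l \<ge> 1" and "m \<ge> 1"
    and "four_ratio \<alpha> (q l) = four_ratio \<alpha>' (q' m)"
  shows "\<forall>t\<ge>1. four_ratio \<alpha> (q (l + t)) = four_ratio \<alpha>' (q' (m + t)) \<and>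
           ((type1 q (l + t - 1) \<and> type1 q' (m + t - 1)) \<or>
            (type2 q (l + t - 1) \<and> type2 q' (m + t - 1)))"
proof -
  have same_ratio: "four_ratio \<alpha> (q (l + t)) = four_ratio \<alpha>' (q' (m + t))" for t
  proof (induction t)
    case 0
    show ?case using assms(5) by simp
  next
    case (Suc t)
    then show ?case
      using MP_tuple_seq_four_ratio_Suc[OF assms(1), of "l + t"]
        MP_tuple_seq_four_ratio_Suc[OF assms(2), of "m + t"] assms(3,4) by simp
  qed
  have same_type: "(type1 q (l + s) \<and> type1 q' (m + s)) \<or> (type2 q (l + s) \<and> type2 q' (m + s))"
    for s
    using MP_tuple_seq_type[OF assms(1), of "l + s"] same_ratio[of s]
      MP_tuple_seq_type1_iff[OF assms(1), of "l + s"] MP_tuple_seq_type2_iff[OF assms(1), of "l + s"]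
      MP_tuple_seq_type1_iff[OF assms(2), of "m + s"] MP_tuple_seq_type2_iff[OF assms(2), of "m + s"]
      assms(3,4) by auto
  show ?thesis
  proof (intro allI impI)
    fix t :: nat
    assume "t \<ge> 1"
    then obtain s where "t = Suc s" by (cases t) auto
    then show "four_ratio \<alpha> (q (l + t)) = four_ratio \<alpha>' (q' (m + t)) \<and>
           ((type1 q (l + t - 1) \<and> type1 q' (m + t - 1)) \<or>
            (type2 q (l + t - 1) \<and> type2 q' (m + t - 1)))"
      using same_ratio[of t] same_type[of s] by simp
  qed
qed

end
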